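(* Let $\mathcal{T}$ be an $l$-eligible multiset of tuples partitioned into multisets $Q_1,\dots,Q_s,R$. Suppose every $Q_i$ is dead and $R$ is not $l$-eligible. Then for every pillar $p$ of $R$ there exists some $i$ such that $p$ is not a conflicting pillar of $Q_i$.
   Context: Each tuple has a sensitive attribute (SA) value. For a multiset $Q$ and SA value $v$, $h(Q,v)$ is the number of tuples in $Q$ with SA value $v$, $h(Q)=\max_v h(Q,v)$, and the pillars of $Q$ are the SA values $v$ with $h(Q,v)=h(Q)$. $Q$ is $l$-eligible if $|Q|\ge l\cdot h(Q)$. A multiset $Q_i$ is thin if $|Q_i|=l\cdot h(Q_i)$; it is conflicting if at least one of its pillars is also a pillar of $R$ (such pillars are its conflicting pillars); it is dead if it is both thin and conflicting. *)

theory Defs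
  imports "HOL-Library.Multiset"
begin

text \<open>Tuples of type 't carry a sensitive attribute given by sa :: 't => 'v.\<close>

definition hcount :: "('t \<Rightarrow> 'v) \<Rightarrow> 't multiset \<Rightarrow> 'v \<Rightarrow> nat" where
  "hcount sa Q v = size (filter_mset (\<lambda>t. sa t = v) Q)"

definition hmax :: "('t \<Rightarrow> 'v) \<Rightarrow> 't multiset \<Rightarrow> nat" where
  "hmax sa Q = Max (insert 0 ((\<lambda>t. hcount sa Q (sa t)) ` set_mset Q))"

definition pillars :: "('t \<Rightarrow> 'v) \<Rightarrow> 't multiset \<Rightarrow> 'v set" where
  "pillars sa Q = {v. hcount sa Q v = hmax sa Q}"

definition eligible :: "('t \<Rightarrow> 'v) \<Rightarrow> nat \<Rightarrow> 't multiset \<Rightarrow> bool" where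
  "eligible sa l Q \<longleftrightarrow> size Q \<ge> l * hmax sa Q"

definition thin :: "('t \<Rightarrow> 'v) \<Rightarrow> nat \<Rightarrow> 't multiset \<Rightarrow> bool" where
  "thin sa l Q \<longleftrightarrow> size Q = l * hmax sa Q"

definition conflicting_pillars :: "('t \<Rightarrow> 'v) \<Rightarrow> 't multiset \<Rightarrow> 't multiset \<Rightarrow> 'v set" where
  "conflicting_pillars sa R Q = pillars sa Q \<inter> pillars sa R"

definition conflicting :: "('t \<Rightarrow> 'v) \<Rightarrow> 't multiset \<Rightarrow> 't multiset \<Rightarrow> bool" where
  "conflicting sa R Q \<longleftrightarrow> conflicting_pillars sa R Q \<noteq> {}"

definition dead :: "('t \<Rightarrow> 'v) \<Rightarrow> nat \<Rightarrow> 't multiset \<Rightarrow> 't multiset \<Rightarrow> bool" where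
  "dead sa l R Q \<longleftrightarrow> thin sa l Q \<and> conflicting sa R Q"

end

theory Submission
  imports Defs
begin

text \<open>If every part of a partition shares the pillar \<open>p\<close> with \<open>R\<close>, then \<open>h(T, p)\<close> is the sum
  of the \<open>h\<close>-values of the parts while \<open>|T|\<close> is the sum of their sizes. Thin parts contribute
  exactly \<open>l\<close> times their \<open>h\<close>-value to \<open>|T|\<close> and the ineligible \<open>R\<close> strictly less, so
  \<open>|T| < l \<cdot> h(T, p) \<le> l \<cdot> h(T)\<close>, contradicting the eligibility of \<open>T\<close>.\<close>

lemma hcount_plus: "hcount sa (A + B) v = hcount sa A v + hcount sa B v"
  by (simp add: hcount_def)

lemma hcount_sum: "hcount sa (\<Sum>i\<in>I. Q i) v = (\<Sum>i\<in>I. hcount sa (Q i) v)"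
  by (induction I rule: infinite_finite_induct) (simp_all add: hcount_plus, simp_all add: hcount_def)

lemma hcount_le_hmax: "hcount sa Q v \<le> hmax sa Q"
proof (cases "hcount sa Q v = 0")
  case False
  then obtain t where "t \<in># filter_mset (\<lambda>t. sa t = v) Q"
    unfolding hcount_def by (metis multiset_nonemptyE size_empty)
  then show ?thesis
    unfolding hmax_def by (intro Max_ge) auto
qed simp

lemma hcount_pillar: "p \<in> pillars sa Q \<Longrightarrow> hcount sa Q p = hmax sa Q"
  by (simp add: pillars_def)

lemma not_eligible_sum_thin_common_pillar:
  assumes thin: "\<forall>i\<in>I. thin sa l (Q i) \<and> p \<in> pillars sa (Q i)"
    and R: "p \<in> pillars sa R" "\<not> eligible sa l R"
  shows "\<not> eligible sa l ((\<Sum>i\<in>I. Q i) + R)" (is "\<not> eligible sa l ?T")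
proof
  assume "eligible sa l ?T"
  have count_T: "hcount sa ?T p = (\<Sum>i\<in>I. hmax sa (Q i)) + hmax sa R"
    using thin R(1) by (simp add: hcount_plus hcount_sum hcount_pillar)
  have size_T: "size ?T = l * (\<Sum>i\<in>I. hmax sa (Q i)) + size R"
    using thin by (simp add: thin_def sum_distrib_left)
  have "size R < l * hmax sa R"
    using R(2) by (simp add: eligible_def)
  then have "size ?T < l * hcount sa ?T p"
    unfolding count_T size_T by (simp add: add_mult_distrib2)
  also have "\<dots> \<le> l * hmax sa ?T"
    by (simp add: hcount_le_hmax)
  finally show False
    using \<open>eligible sa l ?T\<close> by (simp add: eligible_def)
qed

theorem lemma7:
  fixes sa :: "'t \<Rightarrow> 'v" and l s :: nat
    and T R :: "'t multiset" and Q :: "nat \<Rightarrow> 't multiset"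
  assumes "eligible sa l T"
    and "T = (\<Sum>i\<in>{1..s}. Q i) + R"
    and "\<forall>i\<in>{1..s}. dead sa l R (Q i)"
    and "\<not> eligible sa l R"
  shows "\<forall>p\<in>pillars sa R. \<exists>i\<in>{1..s}. p \<notin> conflicting_pillars sa R (Q i)"
proof (rule ccontr)
  assume "\<not> ?thesis"
  then obtain p where p: "p \<in> pillars sa R"
    and common: "\<forall>i\<in>{1..s}. p \<in> conflicting_pillars sa R (Q i)"
    by blast
  have "\<forall>i\<in>{1..s}. thin sa l (Q i) \<and> p \<in> pillars sa (Q i)"
    using assms(3) common by (simp add: dead_def conflicting_pillars_def)
  then have "\<not> eligible sa l ((\<Sum>i\<in>{1..s}. Q i) + R)"
    using p assms(4) by (rule not_eligible_sum_thin_common_pillar)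
  with assms(1,2) show False
    by simp
qed

end
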